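(* Let $M$ be a real symmetric $n\times n$ matrix with $\mathrm{Trace}(M)\ge 0$, and write $\det(xI-M)=\sum_{k=0}^n a_kx^k$. Suppose $M$ has exactly one positive eigenvalue, $r-1$ negative eigenvalues and $n-r$ zero eigenvalues (counted with multiplicity), where $2\le r\le n$. If $\mathrm{Trace}(M)=0$, then $a_k<0$ for $n-r\le k\le n-2$; if $\mathrm{Trace}(M)>0$, then $a_k<0$ for $n-r\le k\le n-1$. *)

theory Defs
  imports "Jordan_Normal_Form.Char_Poly" "HOL-Computational_Algebra.Polynomial"
begin

definition mat_trace :: "'a::comm_ring_1 mat \<Rightarrow> 'a" where
  "mat_trace M = (\<Sum>i<dim_row M. M $$ (i, i))"

end

theory Submission
  imports Defs
begin

(* Since the root multiplicities add up to n, char_poly M = x^(n-r) (x - p) g(x) with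
   g = prod (x - l) over the r - 1 negative eigenvalues l, and tr M = p + sum l.
   The coefficients c_t of g are positive and satisfy c_(t-1) <= (- sum l) c_t, strictly
   below the top degree (this is e_(k+1) <= e_1 e_k for the elementary symmetric functions
   of the numbers -l).  Hence the coefficient c_(t-1) - p c_t of (x - p) g is at most
   -(tr M) c_t <= 0, with strict inequality in the claimed range. *)

lemma degree_prod_linear_factors_le:
  "degree (\<Prod>x\<in>#X. [:-x, 1:]) \<le> size (X :: 'a::comm_ring_1 multiset)"
  by (induction X) (auto simp del: mult_pCons_left intro: order.trans[OF degree_mult_le])

lemma coeff_prod_linear_factors_size:
  "coeff (\<Prod>x\<in>#X. [:-x, 1:]) (size X) = (1 :: 'a::comm_ring_1)"
proof (induction X)
  case (add x X)
  have "coeff (\<Prod>x\<in>#X. [:-x, 1:]) (Suc (size X)) = 0"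
    using degree_prod_linear_factors_le[of X] by (simp add: coeff_eq_0)
  with add.IH show ?case by simp
qed simp

lemma coeff_prod_linear_factors_pred:
  fixes X :: "'a::comm_ring_1 multiset"
  assumes "size X = Suc k"
  shows "coeff (\<Prod>x\<in>#X. [:-x, 1:]) k = - sum_mset X"
  using assms
proof (induction X arbitrary: k)
  case (add x X)
  show ?case
  proof (cases k)
    case 0
    with add.prems show ?thesis by simp
  next
    case (Suc j)
    with add.prems have "size X = Suc j" by simp
    with add.IH coeff_prod_linear_factors_size[of X] show ?thesis
      by (simp add: Suc)
  qed
qed simp

lemma poly_eq_prod_proots:
  fixes p :: "'a::idom poly"
  assumes "size (proots p) = degree p"
  shows "p = Polynomial.smult (lead_coeff p) (\<Prod>x\<in>#proots p. [:-x, 1:])"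
  using assms
proof (induction "degree p" arbitrary: p)
  case 0
  then show ?case by (auto elim!: degree_eq_zeroE)
next
  case (Suc d p)
  then obtain a where "a \<in># proots p" by (metis size_eq_Suc_imp_elem)
  then have "poly p a = 0" by (cases "p = 0") auto
  then obtain q where p: "p = [:-a, 1:] * q" by (metis dvdE poly_eq_0_iff_dvd)
  with Suc.hyps(2) have "q \<noteq> 0" by auto
  then have roots: "proots p = add_mset a (proots q)" and deg: "degree p = Suc (degree q)"
    unfolding p by (simp_all add: proots_mult degree_mult_eq del: mult_pCons_left)
  with Suc have "q = Polynomial.smult (lead_coeff q) (\<Prod>x\<in>#proots q. [:-x, 1:])" by simp
  then have "p = [:-a, 1:] * Polynomial.smult (lead_coeff q) (\<Prod>x\<in>#proots q. [:-x, 1:])"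
    using p by simp
  also have "lead_coeff q = lead_coeff p"
    unfolding p by (simp add: lead_coeff_mult del: mult_pCons_left)
  finally show ?case
    by (simp add: roots mult.left_commute del: mult_pCons_left)
qed

lemma char_poly_matrix_entry:
  assumes "M \<in> carrier_mat n n" "i < n" "j < n"
  shows "char_poly_matrix M $$ (i, j) = (if i = j then [:-M $$ (i, i), 1:] else [:-M $$ (i, j):])"
  using assms by (auto simp: char_poly_matrix_def)

lemma degree_prod_le_card_diff:
  fixes f :: "'b \<Rightarrow> 'a::comm_semiring_1 poly"
  assumes "finite A" "B \<subseteq> A"
    and "\<And>i. i \<in> A \<Longrightarrow> degree (f i) \<le> 1" "\<And>i. i \<in> B \<Longrightarrow> degree (f i) = 0"
  shows "degree (prod f A) \<le> card A - card B"
proof -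
  have "degree (prod f A) \<le> (\<Sum>i\<in>A. degree (f i))"
    using degree_prod_sum_le[OF assms(1)] by (simp add: o_def)
  also have "\<dots> = (\<Sum>i\<in>A - B. degree (f i))"
    by (rule sum.mono_neutral_right) (use assms in auto)
  also have "\<dots> \<le> (\<Sum>i\<in>A - B. 1)"
    by (rule sum_mono) (use assms in auto)
  also have "\<dots> = card A - card B"
    using assms by (simp add: card_Diff_subset finite_subset)
  finally show ?thesis .
qed

lemma degree_char_poly_matrix_perm_prod_le:
  assumes M: "M \<in> carrier_mat n n" and \<sigma>: "\<sigma> permutes {0..<n}" "\<sigma> \<noteq> id"
  shows "degree (\<Prod>i = 0..<n. char_poly_matrix M $$ (i, \<sigma> i)) + 2 \<le> n"
proof -
  obtain i where i: "i < n" "\<sigma> i \<noteq> i"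
    using \<sigma> by (metis atLeastLessThan_iff order_refl permutes_natset_le)
  define j where "j = \<sigma> i"
  have j: "j < n" "\<sigma> j \<noteq> j" "i \<noteq> j"
    using i \<sigma>(1) permutes_in_image[OF \<sigma>(1)] permutes_inj[OF \<sigma>(1)]
    unfolding j_def by (auto dest: injD)
  have \<sigma>_less: "\<sigma> k < n" if "k < n" for k
    using permutes_in_image[OF \<sigma>(1)] that by simp
  have "degree (\<Prod>k = 0..<n. char_poly_matrix M $$ (k, \<sigma> k)) \<le> card {0..<n} - card {i, j}"
    by (rule degree_prod_le_card_diff)
      (use i j \<sigma>_less in \<open>auto simp: char_poly_matrix_entry[OF M] j_def\<close>)
  with i j show ?thesis by simp
qed

lemma coeff_char_poly_eq_neg_trace:
  fixes M :: "'a::comm_ring_1 mat"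
  assumes M: "M \<in> carrier_mat n n" and n: "n = Suc k"
  shows "coeff (char_poly M) k = - mat_trace M"
proof -
  let ?P = "{\<sigma>. \<sigma> permutes {0..<n}}"
  let ?term = "\<lambda>\<sigma>. signof \<sigma> * (\<Prod>i = 0..<n. char_poly_matrix M $$ (i, \<sigma> i))"
  have "char_poly M = (\<Sum>\<sigma> \<in> ?P. ?term \<sigma>)"
    unfolding char_poly_def det_def'[OF char_poly_matrix_closed[OF M]] ..
  also have "\<dots> = ?term id + (\<Sum>\<sigma> \<in> ?P - {id}. ?term \<sigma>)"
    by (rule sum.remove) (simp_all add: finite_permutations permutes_id)
  finally have "coeff (char_poly M) k = coeff (?term id) k + (\<Sum>\<sigma> \<in> ?P - {id}. coeff (?term \<sigma>) k)"
    by (simp add: coeff_sum)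
  also have "(\<Sum>\<sigma> \<in> ?P - {id}. coeff (?term \<sigma>) k) = 0"
  proof (rule sum.neutral, intro ballI)
    fix \<sigma> assume "\<sigma> \<in> ?P - {id}"
    then have "degree (?term \<sigma>) + 2 \<le> n"
      using degree_char_poly_matrix_perm_prod_le[OF M] by simp
    with n show "coeff (?term \<sigma>) k = 0" by (simp add: coeff_eq_0)
  qed
  also have "?term id = (\<Prod>x\<in>#image_mset (\<lambda>i. M $$ (i, i)) (mset_set {0..<n}). [:-x, 1:])"
    by (simp add: prod_unfold_prod_mset char_poly_matrix_entry[OF M] multiset.map_comp o_def)
  also have "coeff \<dots> k = - sum_mset (image_mset (\<lambda>i. M $$ (i, i)) (mset_set {0..<n}))"
    by (rule coeff_prod_linear_factors_pred) (simp add: n)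
  also have "\<dots> = - mat_trace M"
    using M by (simp add: mat_trace_def sum_unfold_sum_mset atLeast0LessThan)
  finally show ?thesis by simp
qed

lemma mat_trace_eq_sum_proots_char_poly:
  fixes M :: "'a::idom mat"
  assumes M: "M \<in> carrier_mat n n" and split: "size (proots (char_poly M)) = n"
  shows "mat_trace M = sum_mset (proots (char_poly M))"
proof (cases n)
  case 0
  with M split show ?thesis by (simp add: mat_trace_def)
next
  case (Suc k)
  have "degree (char_poly M) = n" "lead_coeff (char_poly M) = 1"
    using degree_monic_char_poly[OF M] by simp_all
  with split have "char_poly M = (\<Prod>x\<in>#proots (char_poly M). [:-x, 1:])"
    using poly_eq_prod_proots[of "char_poly M"] by simp
  then have "coeff (char_poly M) k = - sum_mset (proots (char_poly M))"
    using coeff_prod_linear_factors_pred[of "proots (char_poly M)" k] split Suc by simp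
  with coeff_char_poly_eq_neg_trace[OF M Suc] show ?thesis by simp
qed

lemma sum_mset_neg:
  fixes N :: "'a::linordered_ab_group_add multiset"
  assumes "\<forall>x\<in>#N. x < 0" and "N \<noteq> {#}"
  shows "sum_mset N < 0"
  using assms
proof (induction N)
  case (add x N)
  then show ?case by (cases "N = {#}") (auto intro: add_neg_neg)
qed simp

lemma coeff_prod_negative_roots_pos:
  fixes N :: "real multiset"
  assumes "\<forall>x\<in>#N. x < 0" and "t \<le> size N"
  shows "0 < coeff (\<Prod>x\<in>#N. [:-x, 1:]) t"
  using assms
proof (induction N arbitrary: t)
  case (add x N)
  let ?g = "\<Prod>x\<in>#N. [:-x, 1:]"
  have x: "x < 0" and IH: "\<And>t. t \<le> size N \<Longrightarrow> 0 < coeff ?g t"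
    using add by auto
  show ?case
  proof (cases t)
    case 0
    with x IH[of 0] show ?thesis by (simp add: mult_neg_pos)
  next
    case (Suc u)
    show ?thesis
    proof (cases "t \<le> size N")
      case True
      with x IH[of t] have "x * coeff ?g t < 0" by (simp add: mult_neg_pos)
      with IH[of u] True Suc show ?thesis by simp
    next
      case False
      with add.prems Suc have "t = Suc (size N)" by simp
      then have "coeff ?g t = 0"
        using degree_prod_linear_factors_le[of N] by (simp add: coeff_eq_0)
      with IH[of u] Suc \<open>t = Suc (size N)\<close> show ?thesis by simp
    qed
  qed
qed simp

lemma coeff_prod_negative_roots_nonneg:
  fixes N :: "real multiset"
  assumes "\<forall>x\<in>#N. x < 0"
  shows "0 \<le> coeff (\<Prod>x\<in>#N. [:-x, 1:]) t"
proof (cases "t \<le> size N")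
  case True
  with coeff_prod_negative_roots_pos[OF assms] show ?thesis by (simp add: less_imp_le)
next
  case False
  with degree_prod_linear_factors_le[of N] show ?thesis by (simp add: coeff_eq_0)
qed

lemma coeff_linear_factor_mult_ratio_le:
  fixes g :: "real poly"
  assumes "0 \<le> q" "0 \<le> S" "\<And>t. 0 \<le> coeff g t"
    and "\<And>u. t = Suc u \<Longrightarrow> coeff g u \<le> S * coeff g t"
  shows "coeff ([:q, 1:] * g) t + q\<^sup>2 * coeff g (Suc t) \<le> (S + q) * coeff ([:q, 1:] * g) (Suc t)"
proof -
  have "coeff ([:q, 1:] * g) t \<le> q * coeff g t + S * coeff g t"
    using assms by (cases t) auto
  moreover have "0 \<le> S * q * coeff g (Suc t)"
    using assms by simp
  ultimately show ?thesis
    by (simp add: algebra_simps power2_eq_square)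
qed

lemma coeff_prod_negative_roots_ratio_le:
  fixes N :: "real multiset"
  assumes "\<forall>x\<in>#N. x < 0" and "t < size N"
  shows "coeff (\<Prod>x\<in>#N. [:-x, 1:]) t \<le> - sum_mset N * coeff (\<Prod>x\<in>#N. [:-x, 1:]) (Suc t)"
  using assms
proof (induction N arbitrary: t)
  case (add x N)
  let ?g = "\<Prod>x\<in>#N. [:-x, 1:]"
  have neg: "\<forall>x\<in>#N. x < 0" and x: "x < 0" using add.prems by auto
  have "coeff ([:-x, 1:] * ?g) t + (-x)\<^sup>2 * coeff ?g (Suc t)
    \<le> (- sum_mset N + - x) * coeff ([:-x, 1:] * ?g) (Suc t)"
  proof (rule coeff_linear_factor_mult_ratio_le)
    show "0 \<le> - sum_mset N" using neg sum_mset_neg[of N] by (cases "N = {#}") auto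
    show "\<And>u. t = Suc u \<Longrightarrow> coeff ?g u \<le> - sum_mset N * coeff ?g t"
      using add.IH[OF neg] add.prems by simp
  qed (use x coeff_prod_negative_roots_nonneg[OF neg] in auto)
  moreover have "0 \<le> (-x)\<^sup>2 * coeff ?g (Suc t)"
    using coeff_prod_negative_roots_nonneg[OF neg] by simp
  ultimately show ?case by (simp add: add.commute)
qed simp

lemma coeff_prod_negative_roots_ratio_less:
  fixes N :: "real multiset"
  assumes neg: "\<forall>x\<in>#N. x < 0" and t: "Suc t < size N"
  shows "coeff (\<Prod>x\<in>#N. [:-x, 1:]) t < - sum_mset N * coeff (\<Prod>x\<in>#N. [:-x, 1:]) (Suc t)"
proof -
  obtain x N' where N: "N = add_mset x N'"
    using t by (metis less_nat_zero_code multiset_cases size_empty)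
  let ?g = "\<Prod>x\<in>#N'. [:-x, 1:]"
  have neg': "\<forall>x\<in>#N'. x < 0" and x: "x < 0" using neg N by auto
  have "coeff ([:-x, 1:] * ?g) t + (-x)\<^sup>2 * coeff ?g (Suc t)
    \<le> (- sum_mset N' + - x) * coeff ([:-x, 1:] * ?g) (Suc t)"
  proof (rule coeff_linear_factor_mult_ratio_le)
    show "0 \<le> - sum_mset N'" using neg' sum_mset_neg[of N'] by (cases "N' = {#}") auto
    show "\<And>u. t = Suc u \<Longrightarrow> coeff ?g u \<le> - sum_mset N' * coeff ?g t"
      using coeff_prod_negative_roots_ratio_le[OF neg'] t N by simp
  qed (use x coeff_prod_negative_roots_nonneg[OF neg'] in auto)
  moreover have "0 < (-x)\<^sup>2 * coeff ?g (Suc t)"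
    using coeff_prod_negative_roots_pos[OF neg'] x t N by simp
  ultimately show ?thesis using N by (simp add: add.commute)
qed

lemma coeff_positive_root_negative_roots_neg:
  fixes N :: "real multiset" and p :: real
  assumes neg: "\<forall>x\<in>#N. x < 0" and p: "- sum_mset N \<le> p"
    and t: "t < size N \<or> t = size N \<and> - sum_mset N < p"
  shows "coeff ([:-p, 1:] * (\<Prod>x\<in>#N. [:-x, 1:])) t < 0"
proof -
  let ?g = "\<Prod>x\<in>#N. [:-x, 1:]"
  let ?S = "- sum_mset N"
  have pos: "0 < coeff ?g t" using coeff_prod_negative_roots_pos[OF neg] t by auto
  have "0 < p"
  proof (cases "N = {#}")
    case False
    then have "0 < ?S" using neg sum_mset_neg[of N] by simp
    with p show ?thesis by simp
  qed (use t in simp)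
  show ?thesis
  proof (cases t)
    case 0
    with pos \<open>0 < p\<close> show ?thesis by simp
  next
    case (Suc u)
    have "coeff ?g u < p * coeff ?g t"
    proof (cases "t < size N")
      case True
      with Suc have "coeff ?g u < ?S * coeff ?g t"
        using coeff_prod_negative_roots_ratio_less[OF neg, of u] by simp
      also have "\<dots> \<le> p * coeff ?g t" using mult_right_mono[OF p less_imp_le[OF pos]] .
      finally show ?thesis .
    next
      case False
      with t have "?S < p" by simp
      from False t Suc have "coeff ?g u \<le> ?S * coeff ?g t"
        using coeff_prod_negative_roots_ratio_le[OF neg, of u] by simp
      also have "\<dots> < p * coeff ?g t" using mult_strict_right_mono[OF \<open>?S < p\<close> pos] .
      finally show ?thesis .
    qed
    with Suc show ?thesis by simp
  qed
qed

lemma mset_partition_sign: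
  fixes X :: "'a::{linorder,zero} multiset"
  shows "X = filter_mset (\<lambda>x. 0 < x) X + filter_mset (\<lambda>x. x < 0) X + replicate_mset (count X 0) 0"
  by (rule multiset_eqI) (auto simp: not_less_iff_gr_or_eq)

theorem theorem2p2:
  fixes M :: "real mat" and n r :: nat
  assumes "M \<in> carrier_mat n n"
    and "transpose_mat M = M"
    and "mat_trace M \<ge> 0"
    and "2 \<le> r" and "r \<le> n"
    and "size (filter_mset (\<lambda>x. x > 0) (proots (char_poly M))) = 1"
    and "size (filter_mset (\<lambda>x. x < 0) (proots (char_poly M))) = r - 1"
    and "count (proots (char_poly M)) 0 = n - r"
  shows "(mat_trace M = 0 \<longrightarrow> (\<forall>k. n - r \<le> k \<and> k \<le> n - 2 \<longrightarrow> coeff (char_poly M) k < 0))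
       \<and> (mat_trace M > 0 \<longrightarrow> (\<forall>k. n - r \<le> k \<and> k \<le> n - 1 \<longrightarrow> coeff (char_poly M) k < 0))"
proof -
  let ?cp = "char_poly M"
  obtain p where p: "filter_mset (\<lambda>x. 0 < x) (proots ?cp) = {#p#}"
    using size_1_singleton_mset[OF assms(6)] by blast
  define N where "N = filter_mset (\<lambda>x. x < 0) (proots ?cp)"
  have neg: "\<forall>x\<in>#N. x < 0" and size_N: "size N = r - 1"
    using assms(7) unfolding N_def by simp_all
  have roots: "proots ?cp = add_mset p (N + replicate_mset (n - r) 0)"
    using mset_partition_sign[of "proots ?cp"] p assms(8) unfolding N_def by simp
  have split: "size (proots ?cp) = n"
    using roots size_N assms(4,5) by simp
  have "?cp = (\<Prod>x\<in>#proots ?cp. [:-x, 1:])"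
    using poly_eq_prod_proots[of ?cp] degree_monic_char_poly[OF assms(1)] split by simp
  also have "\<dots> = monom 1 (n - r) * ([:-p, 1:] * (\<Prod>x\<in>#N. [:-x, 1:]))"
    unfolding roots by (simp add: monom_altdef mult_ac del: mult_pCons_left)
  finally have shift: "coeff ?cp (n - r + t) = coeff ([:-p, 1:] * (\<Prod>x\<in>#N. [:-x, 1:])) t" for t
    by (simp add: coeff_monom_mult)
  have trace: "mat_trace M = p + sum_mset N"
    using mat_trace_eq_sum_proots_char_poly[OF assms(1) split] roots by simp
  have "coeff ?cp k < 0"
    if low: "n - r \<le> k" and high: "k < n - 1 \<or> k = n - 1 \<and> 0 < mat_trace M" for k
  proof -
    obtain t where k: "k = n - r + t" using le_Suc_ex[OF low] by blast
    with high size_N trace assms(4,5) have "t < size N \<or> t = size N \<and> - sum_mset N < p"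
      by auto
    then show ?thesis
      using coeff_positive_root_negative_roots_neg[OF neg] shift k trace assms(3) by simp
  qed
  with assms(4,5) show ?thesis by fastforce
qed

end
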